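(* Let $X$ be a real Banach space. The following statements are equivalent. (1) $X$ is LUR. (2) $r(Q_{S_X}(x,\frac1n),Q_{S_X}(x',\frac1n))\to\left\|\frac{x}{\|x\|}-\frac{x'}{\|x'\|}\right\|$ as $n\to\infty$ for every $x,x'\in X\setminus\{0\}$. (3) $\mathrm{diam}(Q_{S_X}(x,\frac1n))\to0$ for every $x\in X\setminus\{0\}$. (4) For every $x\in X\setminus\{0\}$, every maximizing sequence in $S_X$ for $x$ converges to $-\frac{x}{\|x\|}$. (5) For every $x\in X\setminus\{0\}$, $Q_{S_X}(x)=\{-\frac{x}{\|x\|}\}$ and $Q_{S_X}(x,\frac1n)\xrightarrow{V}Q_{S_X}(x)$. (6) For every $x\in X\setminus\{0\}$, $Q_{S_X}(x)=\{-\frac{x}{\|x\|}\}$ and $Q_{S_X}(x,\frac1n)\xrightarrow{H}Q_{S_X}(x)$. (7) $S_X$ is SUR on $X\setminus\{0\}$.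
   Context: $B_X,S_X$ are the closed unit ball and unit sphere of $X$. For non-empty bounded $F$, $x\in X$, $\delta\ge0$: $r(F,x)=\sup_{y\in F}\|x-y\|$, $Q_F(x,\delta)=\{y\in F:\|x-y\|\ge r(F,x)-\delta\}$, $Q_F(x)=Q_F(x,0)$. A maximizing sequence in $F$ for $x$ is a sequence $(y_n)$ in $F$ with $\|x-y_n\|\to r(F,x)$. $F$ is SUR (strongly uniquely remotal) on $A$ if for every $x\in A$, $Q_F(x)$ is a singleton and for every $\epsilon>0$ there is $\delta>0$ with $Q_F(x,\delta)\subseteq Q_F(x)+\epsilon B_X$. For non-empty bounded $A,B$, $r(A,B)=\sup\{\|a-b\|:a\in A,b\in B\}$. $X$ is LUR if $x_n\to x$ whenever $x\in S_X$, $(x_n)\subseteq S_X$ and $\|\frac{x_n+x}{2}\|\to1$. For closed bounded sets $C_n,C_0$: $C_n\xrightarrow{V}C_0$ means both (a) for every open $U\supseteq C_0$, eventually $C_n\subseteq U$, and (b) for every open $U$ with $C_0\cap U\ne\emptyset$, eventually $C_n\cap U\neq\emptyset$; $C_n\xrightarrow{H}C_0$ means for every $\epsilon>0$, eventually $C_n\subseteq C_0+\epsilon B_X$ and $C_0\subseteq C_n+\epsilon B_X$. *)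

theory Defs
  imports "HOL-Analysis.Analysis"
begin

definition unit_sphere :: "'a::real_normed_vector set" where
  "unit_sphere = sphere 0 1"

definition farthest_rad :: "'a::real_normed_vector set \<Rightarrow> 'a \<Rightarrow> real" where
  "farthest_rad F x = (SUP y\<in>F. norm (x - y))"

definition Qd :: "'a::real_normed_vector set \<Rightarrow> 'a \<Rightarrow> real \<Rightarrow> 'a set" where
  "Qd F x \<delta> = {y \<in> F. norm (x - y) \<ge> farthest_rad F x - \<delta>}"

definition Q0 :: "'a::real_normed_vector set \<Rightarrow> 'a \<Rightarrow> 'a set" where
  "Q0 F x = Qd F x 0"

definition maximizing_seq :: "'a::real_normed_vector set \<Rightarrow> 'a \<Rightarrow> (nat \<Rightarrow> 'a) \<Rightarrow> bool" where
  "maximizing_seq F x y \<longleftrightarrow> (\<forall>n. y n \<in> F) \<and> ((\<lambda>n. norm (x - y n)) \<longlonglongrightarrow> farthest_rad F x)"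

definition enlarge :: "'a::real_normed_vector set \<Rightarrow> real \<Rightarrow> 'a set" where
  "enlarge A \<epsilon> = {a + b | a b. a \<in> A \<and> norm b \<le> \<epsilon>}"

definition SUR :: "'a::real_normed_vector set \<Rightarrow> 'a set \<Rightarrow> bool" where
  "SUR F A \<longleftrightarrow> (\<forall>x\<in>A. (\<exists>z. Q0 F x = {z}) \<and>
      (\<forall>\<epsilon>>0. \<exists>\<delta>>0. Qd F x \<delta> \<subseteq> enlarge (Q0 F x) \<epsilon>))"

definition set_rad :: "'a::real_normed_vector set \<Rightarrow> 'a set \<Rightarrow> real" where
  "set_rad A B = (SUP p\<in>A \<times> B. norm (fst p - snd p))"

definition LUR :: "'a::real_normed_vector itself \<Rightarrow> bool" where
  "LUR (_::'a itself) \<longleftrightarrow> (\<forall>(x::'a) xs. norm x = 1 \<and> (\<forall>n. norm (xs n) = 1) \<and>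
      ((\<lambda>n. norm ((1/2) *\<^sub>R (xs n + x))) \<longlonglongrightarrow> 1) \<longrightarrow> xs \<longlonglongrightarrow> x)"

definition vietoris_conv :: "(nat \<Rightarrow> 'a::topological_space set) \<Rightarrow> 'a set \<Rightarrow> bool" where
  "vietoris_conv C C0 \<longleftrightarrow>
     (\<forall>U. open U \<and> C0 \<subseteq> U \<longrightarrow> (\<forall>\<^sub>F n in sequentially. C n \<subseteq> U)) \<and>
     (\<forall>U. open U \<and> C0 \<inter> U \<noteq> {} \<longrightarrow> (\<forall>\<^sub>F n in sequentially. C n \<inter> U \<noteq> {}))"

definition hausdorff_conv :: "(nat \<Rightarrow> 'a::real_normed_vector set) \<Rightarrow> 'a set \<Rightarrow> bool" where
  "hausdorff_conv C C0 \<longleftrightarrow>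
     (\<forall>\<epsilon>>0. \<forall>\<^sub>F n in sequentially. C n \<subseteq> enlarge C0 \<epsilon> \<and> C0 \<subseteq> enlarge (C n) \<epsilon>)"

end

theory Submission
  imports Defs
begin

text \<open>
  All seven conditions are equivalent to one property of the sets \<open>Q\<^sub>S(x,\<delta>)\<close>: for every
  \<open>x \<noteq> 0\<close> they shrink to the point \<open>-u\<close>, \<open>u = x/||x||\<close>, as \<open>\<delta> \<rightarrow> 0\<close>.
  Because \<open>r(S,x) = ||x|| + 1\<close>, the triangle inequality applied to \<open>x = ||x|| u\<close> shows that
  every \<open>\<delta>\<close>-farthest point \<open>y\<close> satisfies \<open>||u - y|| \<ge> 2 - \<delta>/min(||x||,1)\<close>.  Hence local
  uniform rotundity at \<open>u\<close> forces every maximizing sequence for \<open>x\<close> to converge to \<open>-u\<close>;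
  conversely, for a unit vector \<open>x\<close> the sequences tested by local uniform rotundity at \<open>x\<close> are
  the negatives of the maximizing sequences for \<open>x\<close>.  This gives (1) \<open>\<longleftrightarrow>\<close> (4), and (4) is
  the sequential form of the shrinking.  The other conditions merely reformulate the shrinking,
  because \<open>-u\<close> lies in every \<open>Q\<^sub>S(x,\<delta>)\<close>: for sets containing a common point \<open>p\<close>,
  diameters tending to \<open>0\<close>, Vietoris and Hausdorff convergence to \<open>{p}\<close> and eventual
  inclusion in every ball around \<open>p\<close> coincide; and \<open>r(A\<^sub>n,B\<^sub>n) \<rightarrow> ||p - q||\<close> when
  \<open>A\<^sub>n\<close> and \<open>B\<^sub>n\<close> shrink to \<open>p\<close> and \<open>q\<close>, while \<open>r(A,A) = diam A\<close>.
\<close>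

section \<open>Farthest points of the unit sphere\<close>

lemma norm_add_sgn: "x \<noteq> 0 \<Longrightarrow> norm (x + sgn x) = norm x + 1"
  for x :: "'a::real_normed_vector"
proof -
  assume "x \<noteq> 0"
  then have "x + sgn x = (norm x + 1) *\<^sub>R sgn x"
    by (simp add: sgn_div_norm algebra_simps)
  with \<open>x \<noteq> 0\<close> show ?thesis
    by (simp add: norm_sgn)
qed

lemma farthest_rad_ge:
  fixes F :: "'a::real_normed_vector set"
  assumes "bounded F" "y \<in> F"
  shows "norm (x - y) \<le> farthest_rad F x"
proof -
  obtain b where b: "\<And>y. y \<in> F \<Longrightarrow> norm y \<le> b"
    using assms(1) by (auto simp: bounded_iff)
  have "norm (x - y) \<le> norm x + b" if "y \<in> F" for y
    using norm_triangle_ineq4[of x y] b[OF that] by linarith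
  then have "bdd_above ((\<lambda>y. norm (x - y)) ` F)"
    by (intro bdd_aboveI2)
  then show ?thesis
    unfolding farthest_rad_def using assms(2) by (rule cSUP_upper2) simp
qed

(* The library's bounded_sphere is stated for heine_borel spaces only. *)
lemma bounded_sphere_general: "bounded (sphere a r)"
  by (rule bounded_subset[OF bounded_cball sphere_cball])

lemma farthest_rad_sphere:
  fixes x :: "'a::real_normed_vector"
  assumes "x \<noteq> 0"
  shows "farthest_rad (sphere 0 1) x = norm x + 1"
proof (rule antisym)
  have "- sgn x \<in> sphere 0 1"
    using assms by (simp add: norm_sgn)
  then show "norm x + 1 \<le> farthest_rad (sphere 0 1) x"
    using farthest_rad_ge[OF bounded_sphere_general \<open>- sgn x \<in> sphere 0 1\<close>, of x] norm_add_sgn[OF assms] by simp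
  show "farthest_rad (sphere 0 1) x \<le> norm x + 1"
    unfolding farthest_rad_def
  proof (rule cSUP_least)
    show "sphere (0::'a) 1 \<noteq> {}"
      using \<open>- sgn x \<in> sphere 0 1\<close> by blast
    show "norm (x - y) \<le> norm x + 1" if "y \<in> sphere 0 1" for y
      using that norm_triangle_ineq4[of x y] by simp
  qed
qed

lemma mono_Qd: "mono (Qd F x)"
  by (auto simp: mono_def Qd_def)

lemma Qd_subset: "Qd F x \<delta> \<subseteq> F"
  by (auto simp: Qd_def)

lemma bounded_Qd_sphere: "bounded (Qd (sphere 0 1) x \<delta>)"
  by (rule bounded_subset[OF bounded_sphere_general Qd_subset])

lemma neg_sgn_in_Qd_sphere:
  fixes x :: "'a::real_normed_vector"
  assumes "x \<noteq> 0" "0 \<le> \<delta>"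
  shows "- sgn x \<in> Qd (sphere 0 1) x \<delta>"
  using assms by (simp add: Qd_def farthest_rad_sphere norm_sgn norm_add_sgn)

lemma sgn_diff_deficit_le:
  fixes x y :: "'a::real_normed_vector"
  assumes "norm y = 1"
  shows "min (norm x) 1 * (2 - norm (sgn x - y)) \<le> norm x + 1 - norm (x - y)"
proof (cases "norm x \<le> 1")
  case True
  have "x - y = norm x *\<^sub>R (sgn x - y) - (1 - norm x) *\<^sub>R y"
    by (cases "x = 0") (simp_all add: sgn_div_norm algebra_simps)
  then have "norm (x - y) \<le> norm x * norm (sgn x - y) + (1 - norm x)"
    using norm_triangle_ineq4[of "norm x *\<^sub>R (sgn x - y)" "(1 - norm x) *\<^sub>R y"] True assms
    by simp
  with True show ?thesis
    by (simp add: algebra_simps)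
next
  case False
  then have "x \<noteq> 0"
    by auto
  have "x - y = (norm x - 1) *\<^sub>R sgn x + (sgn x - y)"
    using \<open>x \<noteq> 0\<close> by (simp add: sgn_div_norm algebra_simps)
  then have "norm (x - y) \<le> norm ((norm x - 1) *\<^sub>R sgn x) + norm (sgn x - y)"
    by (simp only: norm_triangle_ineq)
  also have "norm ((norm x - 1) *\<^sub>R sgn x) = norm x - 1"
    using False \<open>x \<noteq> 0\<close> by (simp add: norm_sgn)
  finally show ?thesis
    using False by simp
qed

lemma tendsto_norm_sgn_diff:
  fixes x :: "'a::real_normed_vector"
  assumes "x \<noteq> 0" "\<And>n. norm (y n) = 1" "(\<lambda>n. norm (x - y n)) \<longlonglongrightarrow> norm x + 1"
  shows "(\<lambda>n. norm (sgn x - y n)) \<longlonglongrightarrow> 2"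
proof (rule tendsto_sandwich)
  define m where "m = min (norm x) 1"
  have "m > 0"
    using assms(1) by (simp add: m_def)
  have "2 - norm (sgn x - y n) \<le> (norm x + 1 - norm (x - y n)) / m" for n
    using sgn_diff_deficit_le[OF assms(2)[of n], of x] \<open>m > 0\<close>
    by (simp add: m_def le_divide_eq mult.commute)
  then have "2 - (norm x + 1 - norm (x - y n)) / m \<le> norm (sgn x - y n)" for n
    by (smt (verit))
  then show "\<forall>\<^sub>F n in sequentially. 2 - (norm x + 1 - norm (x - y n)) / m \<le> norm (sgn x - y n)"
    by simp
  show "\<forall>\<^sub>F n in sequentially. norm (sgn x - y n) \<le> 2"
    using norm_triangle_ineq4[of "sgn x" "y _"] assms(1,2) by (simp add: norm_sgn)
  have "(\<lambda>n. 2 - (norm x + 1 - norm (x - y n)) / m) \<longlonglongrightarrow> 2 - (norm x + 1 - (norm x + 1)) / m"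
    using \<open>m > 0\<close> by (intro tendsto_intros assms(3)) simp
  then show "(\<lambda>n. 2 - (norm x + 1 - norm (x - y n)) / m) \<longlonglongrightarrow> 2"
    by simp
qed simp

section \<open>Shrinking families of sets\<close>

definition shrinks_to :: "(real \<Rightarrow> 'a::metric_space set) \<Rightarrow> 'a \<Rightarrow> bool" where
  "shrinks_to A p \<longleftrightarrow> (\<forall>\<epsilon>>0. \<exists>\<delta>>0. A \<delta> \<subseteq> cball p \<epsilon>)"

lemma eventually_mono_family_subset:
  assumes "mono A" "\<delta> > 0"
  shows "\<forall>\<^sub>F n in sequentially. A (1 / real (Suc n)) \<subseteq> A \<delta>"
proof -
  obtain N where N: "inverse (real (Suc N)) < \<delta>"
    using reals_Archimedean[OF assms(2)] by blast
  have "1 / real (Suc n) \<le> \<delta>" if "N \<le> n" for n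
  proof -
    have "1 / real (Suc n) \<le> 1 / real (Suc N)"
      using that by (simp add: frac_le)
    with N show ?thesis
      by (simp add: inverse_eq_divide)
  qed
  then show ?thesis
    using assms(1) unfolding eventually_sequentially by (meson monoD)
qed

lemma shrinks_to_iff_sequentially:
  assumes "mono A"
  shows "shrinks_to A p \<longleftrightarrow> (\<forall>\<epsilon>>0. \<forall>\<^sub>F n in sequentially. A (1 / real (Suc n)) \<subseteq> cball p \<epsilon>)"
proof
  assume "shrinks_to A p"
  show "\<forall>\<epsilon>>0. \<forall>\<^sub>F n in sequentially. A (1 / real (Suc n)) \<subseteq> cball p \<epsilon>"
  proof (intro allI impI)
    fix \<epsilon> :: real assume "\<epsilon> > 0"
    then obtain \<delta> where "\<delta> > 0" "A \<delta> \<subseteq> cball p \<epsilon>"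
      using \<open>shrinks_to A p\<close> unfolding shrinks_to_def by blast
    from eventually_mono_family_subset[OF assms \<open>\<delta> > 0\<close>]
    show "\<forall>\<^sub>F n in sequentially. A (1 / real (Suc n)) \<subseteq> cball p \<epsilon>"
      by (rule eventually_mono) (use \<open>A \<delta> \<subseteq> cball p \<epsilon>\<close> in blast)
  qed
next
  assume H: "\<forall>\<epsilon>>0. \<forall>\<^sub>F n in sequentially. A (1 / real (Suc n)) \<subseteq> cball p \<epsilon>"
  show "shrinks_to A p"
    unfolding shrinks_to_def
  proof (intro allI impI)
    fix \<epsilon> :: real assume "\<epsilon> > 0"
    then obtain N where "A (1 / real (Suc N)) \<subseteq> cball p \<epsilon>"
      using H unfolding eventually_sequentially by blast
    then show "\<exists>\<delta>>0. A \<delta> \<subseteq> cball p \<epsilon>"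
      by (intro exI[of _ "1 / real (Suc N)"]) simp
  qed
qed

lemma shrinks_to_imp_tendsto:
  assumes "shrinks_to A p" "\<And>\<delta>. \<delta> > 0 \<Longrightarrow> \<forall>\<^sub>F n in sequentially. y n \<in> A \<delta>"
  shows "y \<longlonglongrightarrow> p"
proof (rule tendstoI)
  fix \<epsilon> :: real assume "\<epsilon> > 0"
  then obtain \<delta> where "\<delta> > 0" and \<delta>: "A \<delta> \<subseteq> cball p (\<epsilon> / 2)"
    using assms(1) unfolding shrinks_to_def by (meson half_gt_zero)
  from assms(2)[OF \<open>\<delta> > 0\<close>] show "\<forall>\<^sub>F n in sequentially. dist (y n) p < \<epsilon>"
    by eventually_elim (use \<delta> \<open>\<epsilon> > 0\<close> in \<open>force simp: dist_commute\<close>)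
qed

lemma tendsto_imp_shrinks_to:
  assumes "\<And>y. (\<And>n. y n \<in> A (1 / real (Suc n))) \<Longrightarrow> y \<longlonglongrightarrow> p"
  shows "shrinks_to A p"
  unfolding shrinks_to_def
proof (rule ccontr)
  assume "\<not> (\<forall>\<epsilon>>0. \<exists>\<delta>>0. A \<delta> \<subseteq> cball p \<epsilon>)"
  then obtain \<epsilon> where "\<epsilon> > 0" and far: "\<And>\<delta>. \<delta> > 0 \<Longrightarrow> \<not> A \<delta> \<subseteq> cball p \<epsilon>"
    by blast
  have "\<forall>n. \<exists>z. z \<in> A (1 / real (Suc n)) \<and> \<epsilon> < dist z p"
  proof
    fix n
    have "\<not> A (1 / real (Suc n)) \<subseteq> cball p \<epsilon>"
      by (rule far) simp
    then show "\<exists>z. z \<in> A (1 / real (Suc n)) \<and> \<epsilon> < dist z p"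
      by (auto simp: subset_iff not_le dist_commute)
  qed
  then obtain y where y: "\<And>n. y n \<in> A (1 / real (Suc n)) \<and> \<epsilon> < dist (y n) p"
    by metis
  then have "y \<longlonglongrightarrow> p"
    using assms by blast
  from tendstoD[OF this \<open>\<epsilon> > 0\<close>] obtain N where "\<forall>n\<ge>N. dist (y n) p < \<epsilon>"
    unfolding eventually_sequentially by blast
  with y[of N] show False
    by auto
qed

lemma shrinks_to_singleton:
  assumes "shrinks_to A p" "mono A" "p \<in> A 0"
  shows "A 0 = {p}"
proof -
  have "dist p q \<le> 0 + \<epsilon>" if "q \<in> A 0" "\<epsilon> > 0" for q \<epsilon>
  proof -
    obtain \<delta> where "\<delta> > 0" "A \<delta> \<subseteq> cball p \<epsilon>"
      using assms(1) \<open>\<epsilon> > 0\<close> unfolding shrinks_to_def by blast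
    moreover have "A 0 \<subseteq> A \<delta>"
      using assms(2) \<open>\<delta> > 0\<close> by (simp add: monoD)
    ultimately show ?thesis
      using that(1) by auto
  qed
  then have "q = p" if "q \<in> A 0" for q
    using that field_le_epsilon[of "dist p q" 0] by simp
  with assms(3) show ?thesis
    by blast
qed

section \<open>Sequences of sets around a common point\<close>

lemma diameter_le_if_subset_cball:
  fixes C :: "'a::metric_space set"
  assumes "C \<subseteq> cball p r" "C \<noteq> {}"
  shows "diameter C \<le> 2 * r"
proof -
  have bound: "dist a b \<le> 2 * r" if "a \<in> C" "b \<in> C" for a b
  proof -
    have "dist p a \<le> r" "dist p b \<le> r"
      using that assms(1) by auto
    then show ?thesis
      using dist_triangle3[of a b p] by linarith
  qed
  have "C \<times> C \<noteq> {}"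
    using assms(2) by blast
  then have "(SUP (a, b)\<in>C \<times> C. dist a b) \<le> 2 * r"
    by (rule cSUP_least) (use bound in auto)
  then show ?thesis
    unfolding diameter_def using assms(2) by simp
qed

lemma diameter_tendsto_0_iff:
  fixes C :: "nat \<Rightarrow> 'a::metric_space set"
  assumes "\<And>n. p \<in> C n" "\<And>n. bounded (C n)"
  shows "(\<lambda>n. diameter (C n)) \<longlonglongrightarrow> 0 \<longleftrightarrow> (\<forall>\<epsilon>>0. \<forall>\<^sub>F n in sequentially. C n \<subseteq> cball p \<epsilon>)"
proof
  assume lim: "(\<lambda>n. diameter (C n)) \<longlonglongrightarrow> 0"
  show "\<forall>\<epsilon>>0. \<forall>\<^sub>F n in sequentially. C n \<subseteq> cball p \<epsilon>"
  proof (intro allI impI)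
    fix \<epsilon> :: real assume "\<epsilon> > 0"
    from tendstoD[OF lim this] show "\<forall>\<^sub>F n in sequentially. C n \<subseteq> cball p \<epsilon>"
    proof eventually_elim
      case (elim n)
      have "dist p y \<le> diameter (C n)" if "y \<in> C n" for y
        using diameter_bounded_bound[OF assms(2) assms(1) that] .
      with elim show ?case
        by fastforce
    qed
  qed
next
  assume H: "\<forall>\<epsilon>>0. \<forall>\<^sub>F n in sequentially. C n \<subseteq> cball p \<epsilon>"
  show "(\<lambda>n. diameter (C n)) \<longlonglongrightarrow> 0"
  proof (rule tendstoI)
    fix \<epsilon> :: real assume "\<epsilon> > 0"
    then have "\<epsilon> / 3 > 0"
      by simp
    from H[rule_format, OF this] show "\<forall>\<^sub>F n in sequentially. dist (diameter (C n)) 0 < \<epsilon>"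
    proof eventually_elim
      case (elim n)
      then have "diameter (C n) \<le> 2 * (\<epsilon> / 3)"
        using assms(1)[of n] by (intro diameter_le_if_subset_cball) auto
      with diameter_ge_0[OF assms(2)] \<open>\<epsilon> > 0\<close> show ?case
        by simp
    qed
  qed
qed

lemma vietoris_conv_singleton_iff:
  fixes C :: "nat \<Rightarrow> 'a::metric_space set"
  assumes "\<And>n. p \<in> C n"
  shows "vietoris_conv C {p} \<longleftrightarrow> (\<forall>\<epsilon>>0. \<forall>\<^sub>F n in sequentially. C n \<subseteq> cball p \<epsilon>)"
proof
  assume V: "vietoris_conv C {p}"
  show "\<forall>\<epsilon>>0. \<forall>\<^sub>F n in sequentially. C n \<subseteq> cball p \<epsilon>"
  proof (intro allI impI)
    fix \<epsilon> :: real assume "\<epsilon> > 0"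
    then have "\<forall>\<^sub>F n in sequentially. C n \<subseteq> ball p \<epsilon>"
      using V unfolding vietoris_conv_def by simp
    then show "\<forall>\<^sub>F n in sequentially. C n \<subseteq> cball p \<epsilon>"
      by (rule eventually_mono) (use ball_subset_cball in blast)
  qed
next
  assume H: "\<forall>\<epsilon>>0. \<forall>\<^sub>F n in sequentially. C n \<subseteq> cball p \<epsilon>"
  show "vietoris_conv C {p}"
    unfolding vietoris_conv_def
  proof (intro conjI allI impI)
    fix U assume "open U \<and> {p} \<inter> U \<noteq> {}"
    then have "\<And>n. C n \<inter> U \<noteq> {}"
      using assms by blast
    then show "\<forall>\<^sub>F n in sequentially. C n \<inter> U \<noteq> {}"
      by simp
  next
    fix U assume "open U \<and> {p} \<subseteq> U"
    then have "open U" "p \<in> U"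
      by auto
    obtain e where "e > 0" "ball p e \<subseteq> U"
      using \<open>open U\<close> \<open>p \<in> U\<close> by (rule openE)
    moreover have "cball p (e / 2) \<subseteq> ball p e"
      using \<open>e > 0\<close> by (simp add: subset_iff)
    ultimately have "cball p (e / 2) \<subseteq> U"
      by blast
    from H \<open>e > 0\<close> have "\<forall>\<^sub>F n in sequentially. C n \<subseteq> cball p (e / 2)"
      by simp
    then show "\<forall>\<^sub>F n in sequentially. C n \<subseteq> U"
      by (rule eventually_mono) (use \<open>cball p (e / 2) \<subseteq> U\<close> in blast)
  qed
qed

lemma enlarge_singleton: "enlarge {p} \<epsilon> = cball p \<epsilon>"
  for p :: "'a::real_normed_vector"
proof (intro set_eqI iffI)
  fix y assume "y \<in> enlarge {p} \<epsilon>"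
  then show "y \<in> cball p \<epsilon>"
    by (auto simp: enlarge_def dist_norm)
next
  fix y assume "y \<in> cball p \<epsilon>"
  then have "y = p + (y - p) \<and> norm (y - p) \<le> \<epsilon>"
    by (simp add: dist_norm norm_minus_commute)
  then show "y \<in> enlarge {p} \<epsilon>"
    unfolding enlarge_def by blast
qed

lemma hausdorff_conv_singleton_iff:
  fixes C :: "nat \<Rightarrow> 'a::real_normed_vector set"
  assumes "\<And>n. p \<in> C n"
  shows "hausdorff_conv C {p} \<longleftrightarrow> (\<forall>\<epsilon>>0. \<forall>\<^sub>F n in sequentially. C n \<subseteq> cball p \<epsilon>)"
proof -
  have "{p} \<subseteq> enlarge (C n) \<epsilon>" if "\<epsilon> > 0" for n \<epsilon>
    using assms[of n] that unfolding enlarge_def by force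
  then show ?thesis
    unfolding hausdorff_conv_def enlarge_singleton by simp
qed

lemma set_rad_ge:
  fixes A B :: "'a::real_normed_vector set"
  assumes "bounded A" "bounded B" "a \<in> A" "b \<in> B"
  shows "norm (a - b) \<le> set_rad A B"
proof -
  obtain c d where "\<And>a. a \<in> A \<Longrightarrow> norm a \<le> c" "\<And>b. b \<in> B \<Longrightarrow> norm b \<le> d"
    using assms(1,2) by (meson bounded_iff)
  then have "norm (fst q - snd q) \<le> c + d" if "q \<in> A \<times> B" for q
    using that norm_triangle_ineq4[of "fst q" "snd q"] by fastforce
  then have bdd: "bdd_above ((\<lambda>q. norm (fst q - snd q)) ` (A \<times> B))"
    by (intro bdd_aboveI2)
  have "(a, b) \<in> A \<times> B"
    using assms(3,4) by simp
  from cSUP_upper[OF this bdd] show ?thesis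
    unfolding set_rad_def by simp
qed

lemma set_rad_le:
  assumes "a \<in> A" "b \<in> B" "\<And>a b. a \<in> A \<Longrightarrow> b \<in> B \<Longrightarrow> norm (a - b) \<le> M"
  shows "set_rad A B \<le> M"
  unfolding set_rad_def using assms by (auto intro!: cSUP_least)

lemma set_rad_self: "A \<noteq> {} \<Longrightarrow> set_rad A A = diameter A"
  by (simp add: set_rad_def diameter_def dist_norm case_prod_unfold)

lemma set_rad_tendsto:
  fixes C D :: "nat \<Rightarrow> 'a::real_normed_vector set"
  assumes "\<And>n. p \<in> C n" "\<And>n. q \<in> D n" "\<And>n. bounded (C n)" "\<And>n. bounded (D n)"
    and "\<forall>\<epsilon>>0. \<forall>\<^sub>F n in sequentially. C n \<subseteq> cball p \<epsilon>"
    and "\<forall>\<epsilon>>0. \<forall>\<^sub>F n in sequentially. D n \<subseteq> cball q \<epsilon>"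
  shows "(\<lambda>n. set_rad (C n) (D n)) \<longlonglongrightarrow> norm (p - q)"
proof (rule tendstoI)
  fix \<epsilon> :: real assume "\<epsilon> > 0"
  then have "\<epsilon> / 3 > 0"
    by simp
  from assms(5,6)[rule_format, OF this]
  show "\<forall>\<^sub>F n in sequentially. dist (set_rad (C n) (D n)) (norm (p - q)) < \<epsilon>"
  proof eventually_elim
    case (elim n)
    have "norm (p - q) \<le> set_rad (C n) (D n)"
      by (rule set_rad_ge[OF assms(3,4,1,2)])
    moreover have "set_rad (C n) (D n) \<le> norm (p - q) + 2 * (\<epsilon> / 3)"
    proof (rule set_rad_le[OF assms(1,2)])
      fix a b assume "a \<in> C n" "b \<in> D n"
      then have "norm (p - a) \<le> \<epsilon> / 3" "norm (q - b) \<le> \<epsilon> / 3"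
        using elim by (auto simp: dist_norm)
      have "norm (a - b) = norm ((p - q) - (p - a) + (q - b))"
        by (simp add: algebra_simps)
      also have "\<dots> \<le> norm ((p - q) - (p - a)) + norm (q - b)"
        by (rule norm_triangle_ineq)
      also have "\<dots> \<le> norm (p - q) + norm (p - a) + norm (q - b)"
        using norm_triangle_ineq4[of "p - q" "p - a"] by simp
      finally show "norm (a - b) \<le> norm (p - q) + 2 * (\<epsilon> / 3)"
        using \<open>norm (p - a) \<le> \<epsilon> / 3\<close> \<open>norm (q - b) \<le> \<epsilon> / 3\<close> by linarith
    qed
    ultimately show ?case
      using \<open>\<epsilon> > 0\<close> by (simp add: dist_real_def)
  qed
qed

section \<open>Maximizing sequences and strong unique remotality\<close>

lemma tendsto_iff_eventually_ge_below_bound: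
  fixes f :: "nat \<Rightarrow> real"
  assumes "\<And>n. f n \<le> L"
  shows "f \<longlonglongrightarrow> L \<longleftrightarrow> (\<forall>\<delta>>0. \<forall>\<^sub>F n in sequentially. L - \<delta> \<le> f n)"
proof
  assume lim: "f \<longlonglongrightarrow> L"
  show "\<forall>\<delta>>0. \<forall>\<^sub>F n in sequentially. L - \<delta> \<le> f n"
  proof (intro allI impI)
    fix \<delta> :: real assume "\<delta> > 0"
    with order_tendstoD(1)[OF lim, of "L - \<delta>"] show "\<forall>\<^sub>F n in sequentially. L - \<delta> \<le> f n"
      by (auto elim: eventually_mono)
  qed
next
  assume H: "\<forall>\<delta>>0. \<forall>\<^sub>F n in sequentially. L - \<delta> \<le> f n"
  show "f \<longlonglongrightarrow> L"
  proof (rule order_tendstoI)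
    fix a assume "a < L"
    then have "\<forall>\<^sub>F n in sequentially. L - (L - a) / 2 \<le> f n"
      using H by simp
    moreover have "a < L - (L - a) / 2"
      using \<open>a < L\<close> by (simp add: field_simps)
    ultimately show "\<forall>\<^sub>F n in sequentially. a < f n"
      by (auto elim: eventually_mono intro: less_le_trans)
  next
    fix a assume "L < a"
    then show "\<forall>\<^sub>F n in sequentially. f n < a"
      using assms by (intro always_eventually allI) (rule le_less_trans)
  qed
qed

lemma maximizing_seq_iff_eventually_Qd:
  fixes F :: "'a::real_normed_vector set"
  assumes "bounded F"
  shows "maximizing_seq F x y \<longleftrightarrow>
    (\<forall>n. y n \<in> F) \<and> (\<forall>\<delta>>0. \<forall>\<^sub>F n in sequentially. y n \<in> Qd F x \<delta>)"
proof (cases "\<forall>n. y n \<in> F")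
  case True
  then have "\<And>n. norm (x - y n) \<le> farthest_rad F x"
    using farthest_rad_ge[OF assms] by blast
  from tendsto_iff_eventually_ge_below_bound[of "\<lambda>n. norm (x - y n)", OF this] True
  show ?thesis
    by (simp add: maximizing_seq_def Qd_def)
qed (auto simp: maximizing_seq_def)

lemma maximizing_seqs_tendsto_iff_shrinks_to:
  fixes F :: "'a::real_normed_vector set"
  assumes "bounded F"
  shows "(\<forall>y. maximizing_seq F x y \<longrightarrow> y \<longlonglongrightarrow> p) \<longleftrightarrow> shrinks_to (Qd F x) p"
proof
  assume H: "\<forall>y. maximizing_seq F x y \<longrightarrow> y \<longlonglongrightarrow> p"
  show "shrinks_to (Qd F x) p"
  proof (rule tendsto_imp_shrinks_to)
    fix y assume y: "\<And>n. y n \<in> Qd F x (1 / real (Suc n))"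
    have "maximizing_seq F x y"
      unfolding maximizing_seq_iff_eventually_Qd[OF assms]
    proof (intro conjI allI impI)
      show "y n \<in> F" for n
        using y Qd_subset by blast
      fix \<delta> :: real assume "\<delta> > 0"
      from eventually_mono_family_subset[OF mono_Qd this]
      show "\<forall>\<^sub>F n in sequentially. y n \<in> Qd F x \<delta>"
        by (rule eventually_mono) (use y in blast)
    qed
    with H show "y \<longlonglongrightarrow> p"
      by blast
  qed
next
  assume "shrinks_to (Qd F x) p"
  then show "\<forall>y. maximizing_seq F x y \<longrightarrow> y \<longlonglongrightarrow> p"
    by (auto simp: maximizing_seq_iff_eventually_Qd[OF assms] intro: shrinks_to_imp_tendsto)
qed

lemma SUR_iff_shrinks_to:
  fixes F :: "'a::real_normed_vector set"
  shows "SUR F A \<longleftrightarrow> (\<forall>x\<in>A. \<exists>p. Q0 F x = {p} \<and> shrinks_to (Qd F x) p)"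
  unfolding SUR_def shrinks_to_def by (auto simp: enlarge_singleton)

lemma LUR_iff_maximizing_seqs_tendsto:
  "LUR TYPE('a::real_normed_vector) \<longleftrightarrow>
    (\<forall>x::'a. x \<noteq> 0 \<longrightarrow> (\<forall>y. maximizing_seq (sphere 0 1) x y \<longrightarrow> y \<longlonglongrightarrow> - sgn x))"
proof
  assume lur: "LUR TYPE('a)"
  show "\<forall>x::'a. x \<noteq> 0 \<longrightarrow> (\<forall>y. maximizing_seq (sphere 0 1) x y \<longrightarrow> y \<longlonglongrightarrow> - sgn x)"
  proof (intro allI impI)
    fix x :: 'a and y
    assume "x \<noteq> 0" and "maximizing_seq (sphere 0 1) x y"
    then have y: "\<And>n. norm (y n) = 1" "(\<lambda>n. norm (x - y n)) \<longlonglongrightarrow> norm x + 1"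
      by (auto simp: maximizing_seq_def farthest_rad_sphere)
    have "(\<lambda>n. norm (sgn x - y n) / 2) \<longlonglongrightarrow> 2 / 2"
      by (intro tendsto_divide tendsto_norm_sgn_diff[OF \<open>x \<noteq> 0\<close> y] tendsto_const) simp
    then have "(\<lambda>n. norm ((1 / 2) *\<^sub>R (- y n + sgn x))) \<longlonglongrightarrow> 1"
      by simp
    with lur y(1) \<open>x \<noteq> 0\<close> have "(\<lambda>n. - y n) \<longlonglongrightarrow> sgn x"
      unfolding LUR_def by (simp add: norm_sgn)
    then show "y \<longlonglongrightarrow> - sgn x"
      using tendsto_minus by fastforce
  qed
next
  assume H: "\<forall>x::'a. x \<noteq> 0 \<longrightarrow> (\<forall>y. maximizing_seq (sphere 0 1) x y \<longrightarrow> y \<longlonglongrightarrow> - sgn x)"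
  show "LUR TYPE('a)"
    unfolding LUR_def
  proof (intro allI impI)
    fix x :: 'a and xs
    assume a: "norm x = 1 \<and> (\<forall>n. norm (xs n) = 1) \<and> (\<lambda>n. norm ((1 / 2) *\<^sub>R (xs n + x))) \<longlonglongrightarrow> 1"
    then have "x \<noteq> 0" and "sgn x = x"
      by (auto simp: sgn_div_norm)
    have "(\<lambda>n. 2 * norm ((1 / 2) *\<^sub>R (xs n + x))) \<longlonglongrightarrow> 2 * 1"
      using a by (intro tendsto_mult tendsto_const) simp
    then have "(\<lambda>n. norm (x - - xs n)) \<longlonglongrightarrow> norm x + 1"
      using a by (simp add: add.commute)
    then have "maximizing_seq (sphere 0 1) x (\<lambda>n. - xs n)"
      using a \<open>x \<noteq> 0\<close> by (simp add: maximizing_seq_def farthest_rad_sphere)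
    with H \<open>x \<noteq> 0\<close> \<open>sgn x = x\<close> have "(\<lambda>n. - xs n) \<longlonglongrightarrow> - x"
      by auto
    then show "xs \<longlonglongrightarrow> x"
      using tendsto_minus by fastforce
  qed
qed

lemma Q0_sphere_if_shrinks_to:
  fixes x :: "'a::real_normed_vector"
  assumes "x \<noteq> 0" "shrinks_to (Qd (sphere 0 1) x) (- sgn x)"
  shows "Q0 (sphere 0 1) x = {- sgn x}"
  unfolding Q0_def
  by (rule shrinks_to_singleton[OF assms(2) mono_Qd neg_sgn_in_Qd_sphere[OF assms(1) order_refl]])

lemma diameter_Qd_sphere_tendsto_0_iff:
  fixes x :: "'a::real_normed_vector"
  assumes "x \<noteq> 0"
  shows "(\<lambda>n. diameter (Qd (sphere 0 1) x (1 / real (Suc n)))) \<longlonglongrightarrow> 0 \<longleftrightarrow>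
    shrinks_to (Qd (sphere 0 1) x) (- sgn x)"
  by (simp add: diameter_tendsto_0_iff neg_sgn_in_Qd_sphere[OF assms] bounded_Qd_sphere
      shrinks_to_iff_sequentially[OF mono_Qd])

lemma vietoris_conv_Qd_sphere_iff:
  fixes x :: "'a::real_normed_vector"
  assumes "x \<noteq> 0"
  shows "Q0 (sphere 0 1) x = {- sgn x} \<and>
      vietoris_conv (\<lambda>n. Qd (sphere 0 1) x (1 / real (Suc n))) (Q0 (sphere 0 1) x) \<longleftrightarrow>
    shrinks_to (Qd (sphere 0 1) x) (- sgn x)"
  using Q0_sphere_if_shrinks_to[OF assms]
  by (auto simp: vietoris_conv_singleton_iff neg_sgn_in_Qd_sphere[OF assms]
      shrinks_to_iff_sequentially[OF mono_Qd])

lemma hausdorff_conv_Qd_sphere_iff: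
  fixes x :: "'a::real_normed_vector"
  assumes "x \<noteq> 0"
  shows "Q0 (sphere 0 1) x = {- sgn x} \<and>
      hausdorff_conv (\<lambda>n. Qd (sphere 0 1) x (1 / real (Suc n))) (Q0 (sphere 0 1) x) \<longleftrightarrow>
    shrinks_to (Qd (sphere 0 1) x) (- sgn x)"
  using Q0_sphere_if_shrinks_to[OF assms]
  by (auto simp: hausdorff_conv_singleton_iff neg_sgn_in_Qd_sphere[OF assms]
      shrinks_to_iff_sequentially[OF mono_Qd])

lemma SUR_sphere_iff:
  "SUR (sphere 0 1) (- {0::'a::real_normed_vector}) \<longleftrightarrow>
    (\<forall>x::'a. x \<noteq> 0 \<longrightarrow> shrinks_to (Qd (sphere 0 1) x) (- sgn x))"
proof -
  have unique: "(\<exists>p. Q0 (sphere 0 1) x = {p} \<and> shrinks_to (Qd (sphere 0 1) x) p) \<longleftrightarrow>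
      shrinks_to (Qd (sphere 0 1) x) (- sgn x)" if "x \<noteq> 0" for x :: 'a
    using neg_sgn_in_Qd_sphere[OF that order_refl] Q0_sphere_if_shrinks_to[OF that]
    by (auto simp: Q0_def)
  then show ?thesis
    by (auto simp: SUR_iff_shrinks_to)
qed

lemma set_rad_Qd_sphere_iff:
  "(\<forall>x x'::'a::real_normed_vector. x \<noteq> 0 \<and> x' \<noteq> 0 \<longrightarrow>
      (\<lambda>n. set_rad (Qd (sphere 0 1) x (1 / real (Suc n))) (Qd (sphere 0 1) x' (1 / real (Suc n))))
        \<longlonglongrightarrow> norm (sgn x - sgn x')) \<longleftrightarrow>
    (\<forall>x::'a. x \<noteq> 0 \<longrightarrow> shrinks_to (Qd (sphere 0 1) x) (- sgn x))"
proof (intro iffI allI impI)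
  fix x :: 'a
  assume H: "\<forall>x x'::'a. x \<noteq> 0 \<and> x' \<noteq> 0 \<longrightarrow>
      (\<lambda>n. set_rad (Qd (sphere 0 1) x (1 / real (Suc n))) (Qd (sphere 0 1) x' (1 / real (Suc n))))
        \<longlonglongrightarrow> norm (sgn x - sgn x')"
    and "x \<noteq> 0"
  have "- sgn x \<in> Qd (sphere 0 1) x (1 / real (Suc n))" for n
    by (rule neg_sgn_in_Qd_sphere[OF \<open>x \<noteq> 0\<close>]) simp
  then have "Qd (sphere 0 1) x (1 / real (Suc n)) \<noteq> {}" for n
    by blast
  moreover have "(\<lambda>n. set_rad (Qd (sphere 0 1) x (1 / real (Suc n))) (Qd (sphere 0 1) x (1 / real (Suc n))))
      \<longlonglongrightarrow> norm (sgn x - sgn x)"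
    using H \<open>x \<noteq> 0\<close> by blast
  ultimately have "(\<lambda>n. diameter (Qd (sphere 0 1) x (1 / real (Suc n)))) \<longlonglongrightarrow> 0"
    by (simp add: set_rad_self)
  then show "shrinks_to (Qd (sphere 0 1) x) (- sgn x)"
    using diameter_Qd_sphere_tendsto_0_iff[OF \<open>x \<noteq> 0\<close>] by blast
next
  fix x x' :: 'a
  assume H: "\<forall>x::'a. x \<noteq> 0 \<longrightarrow> shrinks_to (Qd (sphere 0 1) x) (- sgn x)"
    and "x \<noteq> 0 \<and> x' \<noteq> 0"
  have shrinks: "\<forall>\<epsilon>>0. \<forall>\<^sub>F n in sequentially. Qd (sphere 0 1) z (1 / real (Suc n)) \<subseteq> cball (- sgn z) \<epsilon>"
    if "z \<noteq> 0" for z :: 'a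
    using H[rule_format, OF that] unfolding shrinks_to_iff_sequentially[OF mono_Qd] .
  have centre: "- sgn z \<in> Qd (sphere 0 1) z (1 / real (Suc n))" if "z \<noteq> 0" for z :: 'a and n
    by (rule neg_sgn_in_Qd_sphere[OF that]) simp
  from \<open>x \<noteq> 0 \<and> x' \<noteq> 0\<close> have "x \<noteq> 0" "x' \<noteq> 0"
    by auto
  have "(\<lambda>n. set_rad (Qd (sphere 0 1) x (1 / real (Suc n))) (Qd (sphere 0 1) x' (1 / real (Suc n))))
      \<longlonglongrightarrow> norm (- sgn x - - sgn x')"
    by (rule set_rad_tendsto[OF centre centre bounded_Qd_sphere bounded_Qd_sphere shrinks shrinks])
      (fact \<open>x \<noteq> 0\<close> \<open>x' \<noteq> 0\<close>)+
  then show "(\<lambda>n. set_rad (Qd (sphere 0 1) x (1 / real (Suc n))) (Qd (sphere 0 1) x' (1 / real (Suc n))))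
      \<longlonglongrightarrow> norm (sgn x - sgn x')"
    by (simp add: norm_minus_commute)
qed

lemma inverse_norm_scaleR_eq_sgn: "(1 / norm x) *\<^sub>R x = sgn x"
  for x :: "'a::real_normed_vector"
  by (simp add: sgn_div_norm divide_inverse_commute)

theorem theorem3p7:
  shows
  "let S = (unit_sphere :: 'a::banach set);
       c1 = LUR TYPE('a);
       c2 = (\<forall>x x'. x \<noteq> 0 \<and> x' \<noteq> 0 \<longrightarrow>
              ((\<lambda>n. set_rad (Qd S x (1 / real (Suc n))) (Qd S x' (1 / real (Suc n))))
                 \<longlonglongrightarrow> norm ((1 / norm x) *\<^sub>R x - (1 / norm x') *\<^sub>R x')));
       c3 = (\<forall>x. x \<noteq> 0 \<longrightarrow> ((\<lambda>n. diameter (Qd S x (1 / real (Suc n)))) \<longlonglongrightarrow> 0));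
       c4 = (\<forall>x. x \<noteq> 0 \<longrightarrow> (\<forall>y. maximizing_seq S x y \<longrightarrow> y \<longlonglongrightarrow> - ((1 / norm x) *\<^sub>R x)));
       c5 = (\<forall>x. x \<noteq> 0 \<longrightarrow> Q0 S x = {- ((1 / norm x) *\<^sub>R x)} \<and>
              vietoris_conv (\<lambda>n. Qd S x (1 / real (Suc n))) (Q0 S x));
       c6 = (\<forall>x. x \<noteq> 0 \<longrightarrow> Q0 S x = {- ((1 / norm x) *\<^sub>R x)} \<and>
              hausdorff_conv (\<lambda>n. Qd S x (1 / real (Suc n))) (Q0 S x));
       c7 = SUR S (- {0})
   in (c1 \<longleftrightarrow> c2) \<and> (c1 \<longleftrightarrow> c3) \<and> (c1 \<longleftrightarrow> c4) \<and> (c1 \<longleftrightarrow> c5) \<and>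
      (c1 \<longleftrightarrow> c6) \<and> (c1 \<longleftrightarrow> c7)"
  unfolding Let_def unit_sphere_def inverse_norm_scaleR_eq_sgn
  by (simp only: LUR_iff_maximizing_seqs_tendsto
      maximizing_seqs_tendsto_iff_shrinks_to[OF bounded_sphere_general]
      diameter_Qd_sphere_tendsto_0_iff vietoris_conv_Qd_sphere_iff hausdorff_conv_Qd_sphere_iff
      set_rad_Qd_sphere_iff SUR_sphere_iff simp_thms cong: imp_cong)

end
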